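(* Let $\mathbb F$ be any field, $n\ge k>1$, let $\mathcal K\subseteq M_{n\times k}(\mathbb F)$ be a linear variety, let $B^*\subseteq[n]\times[k]$ be a cobasis of $\mathcal M(\mathcal K)$, let $1\le j'\le k$ be such that $B^*\cap([n]\times\{j'\})=\varnothing$, let $1\le i'\le n$ and $c_1,\dots,c_n\in\mathbb F$. Put $$\mathcal K'=\{X(i'|j') : X\in\mathcal K,\ X_{i\,j'}=c_i\text{ for all }1\le i\le n\}\subseteq M_{(n-1)\times(k-1)}(\mathbb F).$$ Then: (a) $\mathcal K'$ is a linear variety; (b) $\operatorname{codim}(\mathcal K')\le\operatorname{codim}(\mathcal K)-|B^*\cap(\{i'\}\times[k])|$; (c) if ${B'}^*$ is a cobasis of $\mathcal M(\mathcal K')$, then $\big(B^*\cap(\{i'\}\times[k])\big)\cup\iota({B'}^* )$ is a coindependent set of $\mathcal M(\mathcal K)$; (d) if $\det_{n,k}(X)=0$ for all $X\in\mathcal K$ and $c_i=\delta_{i\,i'}$ for all $i$, then $\det_{n-1,k-1}(X')=0$ for all $X'\in\mathcal K'$.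
   Context: $X(i'|j')$ denotes the matrix obtained from $X$ by deleting row $i'$ and column $j'$. The map $\iota=\iota^{(i',j')}:[n-1]\times[k-1]\to[n]\times[k]$ is $\iota(a,b)=(a',b')$ with $a'=a+1$ if $a\ge i'$ and $a'=a$ otherwise, $b'=b+1$ if $b\ge j'$ and $b'=b$ otherwise (it sends the position of an entry of $X(i'|j')$ to its position in $X$). A linear variety is a nonempty set $\mathbf s+V$ with $V$ a linear subspace (uniquely determined); codimension = ambient dimension minus $\dim V$ (ambient spaces $M_{n\times k}$ and $M_{(n-1)\times(k-1)}$ respectively). Identify $M_{n\times k}(\mathbb F)$ with $\mathbb F^{[n]\times[k]}$. Matroid $\mathcal M(\mathcal K)$ of $\mathcal K=\mathbf s+V\subseteq\mathbb F^E$: matroid on $E$ with rank function $r(S)=\dim\operatorname{span}\{x_e|_V:e\in S\}$, $x_e$ coordinate functionals. Cobasis = complement of a basis; coindependent set = subset of a cobasis. Cullis' determinant: $\det_{n,k}(X)=\sum_{c}\operatorname{sgn}(c)\det(X[c|))$, sum over $k$-subsets $c=\{c(1)<\dots<c(k)\}$ of $[n]$, $X[c|)$ the submatrix of rows in $c$, $\operatorname{sgn}(c)=(-1)^{\sum_\alpha(c(\alpha)-\alpha)}$. *)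

theory Defs
  imports Main "HOL.Vector_Spaces" "HOL-Library.Function_Algebras" "HOL-Combinatorics.Permutations"
begin

text \<open>Elements of \<open>F^E\<close> (and matrices in \<open>M_{n x k}(F)\<close>, identified with
  \<open>F^{[n] x [k]}\<close>) are represented as functions \<open>nat \<times> nat \<Rightarrow> 'a\<close> vanishing
  outside the index set \<open>E\<close>.\<close>

definition supp_on :: "(nat \<times> nat) set \<Rightarrow> (nat \<times> nat \<Rightarrow> 'a::zero) set" where
  "supp_on E = {f. \<forall>x. x \<notin> E \<longrightarrow> f x = 0}"

definition idx :: "nat \<Rightarrow> nat \<Rightarrow> (nat \<times> nat) set" where
  "idx n k = {1..n} \<times> {1..k}"

definition fscale :: "'a::field \<Rightarrow> ('b \<Rightarrow> 'a) \<Rightarrow> ('b \<Rightarrow> 'a)" where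
  "fscale c f = (\<lambda>x. c * f x)"

definition fdim :: "('b \<Rightarrow> 'a::field) set \<Rightarrow> nat" where
  "fdim A = vector_space.dim fscale A"

definition lin_subspace :: "(nat \<times> nat) set \<Rightarrow> (nat \<times> nat \<Rightarrow> 'a::field) set \<Rightarrow> bool" where
  "lin_subspace E V \<longleftrightarrow> V \<subseteq> supp_on E \<and> 0 \<in> V \<and>
     (\<forall>u\<in>V. \<forall>v\<in>V. u + v \<in> V) \<and> (\<forall>c. \<forall>v\<in>V. fscale c v \<in> V)"

definition linear_variety :: "(nat \<times> nat) set \<Rightarrow> (nat \<times> nat \<Rightarrow> 'a::field) set \<Rightarrow> bool" where
  "linear_variety E K \<longleftrightarrow>
     (\<exists>s V. s \<in> supp_on E \<and> lin_subspace E V \<and> K = (\<lambda>v. s + v) ` V)"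

text \<open>The (uniquely determined) direction space \<open>V\<close> of \<open>K = s + V\<close> is \<open>K - K\<close>.\<close>
definition direction :: "(nat \<times> nat \<Rightarrow> 'a::field) set \<Rightarrow> (nat \<times> nat \<Rightarrow> 'a) set" where
  "direction K = {x - y |x y. x \<in> K \<and> y \<in> K}"

definition codim :: "(nat \<times> nat) set \<Rightarrow> (nat \<times> nat \<Rightarrow> 'a::field) set \<Rightarrow> nat" where
  "codim E K = card E - fdim (direction K)"

text \<open>Matroid \<open>M(K)\<close>: rank of \<open>S\<close> is the dimension of the span of the coordinate
  functionals \<open>x_e\<close>, \<open>e \<in> S\<close>, restricted to \<open>V\<close> (extended by 0 off \<open>V\<close>).\<close>
definition coord_restr :: "(nat \<times> nat \<Rightarrow> 'a::field) set \<Rightarrow> nat \<times> nat \<Rightarrow> ((nat \<times> nat \<Rightarrow> 'a) \<Rightarrow> 'a)" where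
  "coord_restr V e = (\<lambda>v. if v \<in> V then v e else 0)"

definition mrank :: "(nat \<times> nat \<Rightarrow> 'a::field) set \<Rightarrow> (nat \<times> nat) set \<Rightarrow> nat" where
  "mrank K S = fdim (module.span fscale (coord_restr (direction K) ` S))"

definition m_indep :: "(nat \<times> nat) set \<Rightarrow> (nat \<times> nat \<Rightarrow> 'a::field) set \<Rightarrow> (nat \<times> nat) set \<Rightarrow> bool" where
  "m_indep E K S \<longleftrightarrow> S \<subseteq> E \<and> mrank K S = card S"

definition m_basis :: "(nat \<times> nat) set \<Rightarrow> (nat \<times> nat \<Rightarrow> 'a::field) set \<Rightarrow> (nat \<times> nat) set \<Rightarrow> bool" where
  "m_basis E K B \<longleftrightarrow> m_indep E K B \<and> (\<forall>S. B \<subset> S \<and> S \<subseteq> E \<longrightarrow> \<not> m_indep E K S)"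

definition m_cobasis :: "(nat \<times> nat) set \<Rightarrow> (nat \<times> nat \<Rightarrow> 'a::field) set \<Rightarrow> (nat \<times> nat) set \<Rightarrow> bool" where
  "m_cobasis E K C \<longleftrightarrow> (\<exists>B. m_basis E K B \<and> C = E - B)"

definition m_coindep :: "(nat \<times> nat) set \<Rightarrow> (nat \<times> nat \<Rightarrow> 'a::field) set \<Rightarrow> (nat \<times> nat) set \<Rightarrow> bool" where
  "m_coindep E K C \<longleftrightarrow> (\<exists>D. m_cobasis E K D \<and> C \<subseteq> D)"

definition iota :: "nat \<Rightarrow> nat \<Rightarrow> nat \<times> nat \<Rightarrow> nat \<times> nat" where
  "iota i' j' = (\<lambda>(a, b). (if a \<ge> i' then a + 1 else a, if b \<ge> j' then b + 1 else b))"

definition delete_rc :: "nat \<Rightarrow> nat \<Rightarrow> nat \<Rightarrow> nat \<Rightarrow> (nat \<times> nat \<Rightarrow> 'a::zero) \<Rightarrow> (nat \<times> nat \<Rightarrow> 'a)" where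
  "delete_rc n k i' j' X = (\<lambda>p. if p \<in> idx (n - 1) (k - 1) then X (iota i' j' p) else 0)"

definition sqdet :: "nat \<Rightarrow> (nat \<times> nat \<Rightarrow> 'a::comm_ring_1) \<Rightarrow> 'a" where
  "sqdet k M = (\<Sum>p | p permutes {1..k}. of_int (sign p) * (\<Prod>i\<in>{1..k}. M (i, p i)))"

text \<open>Cullis' determinant; \<open>c(\<alpha>)\<close> is the \<open>\<alpha>\<close>-th smallest element of \<open>c\<close>.\<close>
definition cullis :: "nat \<Rightarrow> nat \<Rightarrow> (nat \<times> nat \<Rightarrow> 'a::comm_ring_1) \<Rightarrow> 'a" where
  "cullis n k X = (\<Sum>c | c \<subseteq> {1..n} \<and> card c = k.
      (- 1) ^ (\<Sum>\<alpha>\<in>{1..k}. sorted_list_of_set c ! (\<alpha> - 1) - \<alpha>) *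
      sqdet k (\<lambda>(\<alpha>, \<beta>). X (sorted_list_of_set c ! (\<alpha> - 1), \<beta>)))"

end

(* The coordinates of the direction space V of a linear variety are independent in its matroid
   exactly when V separates them: for each of them some vector of V is 1 there and 0 at the others.
   So the values of K on a basis B can be prescribed freely, B has a dual family in V, and a vector
   of V vanishing on B is 0.  As column j' lies in B, the slice of K on which that column equals c
   is a linear variety, and K' is its image under the linear map deleting row i' and column j'.
   The dual vectors of the entries of B off row i' and column j' stay biorthogonal after deletion,
   which bounds dim K' from below and gives (b).  A vector of V vanishing off the set in (c)
   vanishes on column j', so after deletion it vanishes on a basis of K', hence on all of B, which
   gives (c).  For (d), when column j' is the unit vector at i', only the row sets containing i'
   contribute to Cullis' determinant, and Laplace expansion along column j' matches their terms
   with those of the deleted matrix up to the common sign (-1)^(i'+j'). *)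

theory Submission
  imports Defs "Jordan_Normal_Form.Determinant"
begin

section \<open>Coordinates of vectors in a subspace\<close>

interpretation fun_vs: vector_space "fscale :: 'a::field \<Rightarrow> ('b \<Rightarrow> 'a) \<Rightarrow> ('b \<Rightarrow> 'a)"
  by unfold_locales (auto simp: fscale_def algebra_simps)

lemma fdim_eq_dim: "fdim A = fun_vs.dim A"
  by (simp add: fdim_def)

lemma fscale_apply [simp]: "fscale c f x = c * f x"
  by (simp add: fscale_def)

lemma sum_apply: "(\<Sum>x\<in>A. f x) p = (\<Sum>x\<in>A. f x p)"
  by (induction A rule: infinite_finite_induct) auto

lemma supp_onD: "f \<in> supp_on E \<Longrightarrow> x \<notin> E \<Longrightarrow> f x = 0"
  unfolding supp_on_def by blast

lemma supp_on_subspace: "fun_vs.subspace (supp_on E)"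
  by (auto simp: fun_vs.subspace_def supp_on_def)

lemma sum_biorthogonal:
  assumes "finite T" "e \<in> T" "\<And>b. b \<in> T \<Longrightarrow> d b e = (if b = e then 1 else 0)"
  shows "(\<Sum>b\<in>T. g b * d b e) = (g e :: 'a::comm_ring_1)"
proof -
  have "(\<Sum>b\<in>T. g b * d b e) = (\<Sum>b\<in>T. if b = e then g b else 0)"
    using assms(3) by (intro sum.cong) auto
  then show ?thesis
    using assms(1,2) by simp
qed

lemma supp_on_span_units:
  assumes "finite E"
  shows "(supp_on E :: (nat \<times> nat \<Rightarrow> 'a::field) set) \<subseteq> fun_vs.span ((\<lambda>e p. if e = p then 1 else 0) ` E)"
proof
  fix f :: "nat \<times> nat \<Rightarrow> 'a" assume f: "f \<in> supp_on E"
  have "(\<Sum>e\<in>E. fscale (f e) (\<lambda>p. if e = p then 1 else 0)) p = f p" for p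
  proof (cases "p \<in> E")
    case True
    show ?thesis
      unfolding sum_apply fscale_apply by (rule sum_biorthogonal[OF assms True]) simp
  next
    case False
    then show ?thesis
      by (auto simp: sum_apply supp_onD[OF f] intro!: sum.neutral)
  qed
  then have "f = (\<Sum>e\<in>E. fscale (f e) (\<lambda>p. if e = p then 1 else 0))"
    by (intro ext) (rule sym)
  also have "\<dots> \<in> fun_vs.span ((\<lambda>e p. if e = p then 1 else 0) ` E)"
    by (intro fun_vs.span_sum fun_vs.span_scale fun_vs.span_base imageI)
  finally show "f \<in> fun_vs.span ((\<lambda>e p. if e = p then 1 else 0) ` E)" .
qed

lemma independent_card_le_fdim:
  assumes E: "finite E" and W: "W \<subseteq> supp_on E" and I: "I \<subseteq> W" "fun_vs.independent I"
  shows "card I \<le> fdim W"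
proof -
  obtain A where A: "I \<subseteq> A" "A \<subseteq> W" "fun_vs.independent A" "W \<subseteq> fun_vs.span A"
    using fun_vs.maximal_independent_subset_extend[OF I] by blast
  have "A \<subseteq> fun_vs.span ((\<lambda>e p. if e = p then 1 else 0) ` E)"
    using A(2) W supp_on_span_units[OF E] by blast
  then have "finite A"
    using fun_vs.independent_span_bound[OF finite_imageI[OF E] A(3)] by blast
  then have "card I \<le> card A"
    using A(1) by (rule card_mono)
  also have "\<dots> = fdim W"
    using fun_vs.basis_card_eq_dim[OF A(2,4,3)] by (simp add: fdim_eq_dim)
  finally show ?thesis .
qed

lemma biorthogonal_independent:
  assumes P: "finite P" and f: "\<And>p p'. p \<in> P \<Longrightarrow> p' \<in> P \<Longrightarrow> f p (q p') = (if p = p' then 1 else 0)"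
  shows "inj_on f P" "fun_vs.independent (f ` P)"
proof -
  show inj: "inj_on f P"
  proof (rule inj_onI)
    fix p p' assume "p \<in> P" "p' \<in> P" "f p = f p'"
    then have "f p' (q p') = f p (q p')"
      by simp
    then show "p = p'"
      using f \<open>p \<in> P\<close> \<open>p' \<in> P\<close> by (simp split: if_split_asm)
  qed
  have "u x = 0" if sum0: "(\<Sum>x\<in>f ` P. fscale (u x) x) = 0" and "x \<in> f ` P" for u x
  proof -
    obtain p where p: "p \<in> P" "x = f p"
      using \<open>x \<in> f ` P\<close> by blast
    have "(\<Sum>x\<in>f ` P. fscale (u x) x) (q p) = (\<Sum>p'\<in>P. u (f p') * f p' (q p))"
      using inj by (simp add: sum.reindex sum_apply)
    also have "\<dots> = u (f p)"
      by (rule sum_biorthogonal[OF P p(1)]) (simp add: f p(1))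
    finally show "u x = 0"
      using sum0 p(2) by simp
  qed
  then show "fun_vs.independent (f ` P)"
    using P by (intro fun_vs.independent_if_scalars_zero) auto
qed

lemma card_le_fdim_biorthogonal:
  assumes E: "finite E" and W: "W \<subseteq> supp_on E"
    and f: "\<And>p. p \<in> P \<Longrightarrow> f p \<in> W"
      "\<And>p p'. p \<in> P \<Longrightarrow> p' \<in> P \<Longrightarrow> f p p' = (if p = p' then 1 else 0)"
  shows "card P \<le> fdim W"
proof -
  have "p \<in> E" if "p \<in> P" for p
  proof (rule ccontr)
    assume "p \<notin> E"
    then have "f p p = 0"
      using supp_onD f(1)[OF that] W by blast
    then show False
      using f(2)[OF that that] by simp
  qed
  then have "finite P"
    using finite_subset[OF _ E, of P] by blast
  note ind = biorthogonal_independent[of P f "\<lambda>p. p", OF this f(2)]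
  have "card P = card (f ` P)"
    using ind(1) by (rule card_image[symmetric])
  also have "\<dots> \<le> fdim W"
    using f(1) ind(2) by (intro independent_card_le_fdim[OF E W]) auto
  finally show ?thesis .
qed

definition coord_separated :: "('b \<Rightarrow> 'a::field) set \<Rightarrow> 'b set \<Rightarrow> bool" where
  "coord_separated V S \<longleftrightarrow> (\<forall>e\<in>S. \<exists>v\<in>V. v e = 1 \<and> (\<forall>e'\<in>S - {e}. v e' = 0))"

definition coord_independent :: "('b \<Rightarrow> 'a::field) set \<Rightarrow> 'b set \<Rightarrow> bool" where
  "coord_independent V S \<longleftrightarrow> (\<forall>a. (\<forall>v\<in>V. (\<Sum>e\<in>S. a e * v e) = 0) \<longrightarrow> (\<forall>e\<in>S. a e = 0))"

lemma coord_independentD: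
  "coord_independent V S \<Longrightarrow> (\<And>v. v \<in> V \<Longrightarrow> (\<Sum>e\<in>S. a e * v e) = 0) \<Longrightarrow> e \<in> S \<Longrightarrow> a e = 0"
  unfolding coord_independent_def by blast

lemma coord_separatedE:
  assumes "coord_separated V S"
  obtains d where "\<And>e. e \<in> S \<Longrightarrow> d e \<in> V"
    "\<And>e e'. e \<in> S \<Longrightarrow> e' \<in> S \<Longrightarrow> d e e' = (if e = e' then 1 else 0)"
proof -
  obtain d where "\<forall>e\<in>S. d e \<in> V \<and> d e e = 1 \<and> (\<forall>e'\<in>S - {e}. d e e' = 0)"
    using assms bchoice[of S "\<lambda>e v. v \<in> V \<and> v e = 1 \<and> (\<forall>e'\<in>S - {e}. v e' = 0)"]
    unfolding coord_separated_def by blast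
  then show ?thesis
    using that by (metis DiffI singletonD)
qed

lemma coord_separated_subset: "coord_separated V S \<Longrightarrow> T \<subseteq> S \<Longrightarrow> coord_separated V T"
  unfolding coord_separated_def by (meson Diff_mono order_refl subsetD)

lemma coord_separated_prescribe:
  assumes V: "fun_vs.subspace V" and "finite S" "coord_separated V S"
  obtains v where "v \<in> V" "\<And>e. e \<in> S \<Longrightarrow> v e = g e"
proof -
  obtain d where d: "\<And>e. e \<in> S \<Longrightarrow> d e \<in> V"
    "\<And>e e'. e \<in> S \<Longrightarrow> e' \<in> S \<Longrightarrow> d e e' = (if e = e' then 1 else 0)"
    using coord_separatedE[OF assms(3)] by blast
  show ?thesis
  proof
    show "(\<Sum>b\<in>S. fscale (g b) (d b)) \<in> V"
      using d(1) by (intro fun_vs.subspace_sum[OF V] fun_vs.subspace_scale[OF V])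
    show "(\<Sum>b\<in>S. fscale (g b) (d b)) e = g e" if "e \<in> S" for e
    proof -
      have "(\<Sum>b\<in>S. fscale (g b) (d b)) e = (\<Sum>b\<in>S. g b * d b e)"
        by (simp add: sum_apply)
      also have "\<dots> = g e"
        by (rule sum_biorthogonal[OF assms(2) that]) (simp add: d(2) that)
      finally show ?thesis .
    qed
  qed
qed

lemma coord_separated_insert:
  assumes V: "fun_vs.subspace V" and S: "coord_separated V S"
    and w: "w \<in> V" "\<And>b. b \<in> S \<Longrightarrow> w b = 0" "w e \<noteq> 0"
  shows "coord_separated V (insert e S)"
proof -
  obtain d where d: "\<And>b. b \<in> S \<Longrightarrow> d b \<in> V"
    "\<And>b b'. b \<in> S \<Longrightarrow> b' \<in> S \<Longrightarrow> d b b' = (if b = b' then 1 else 0)"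
    using coord_separatedE[OF S] by blast
  define u where "u = fscale (1 / w e) w"
  have u: "u \<in> V" "u e = 1" "\<And>b. b \<in> S \<Longrightarrow> u b = 0"
    using w fun_vs.subspace_scale[OF V] by (auto simp: u_def)
  have "\<exists>v\<in>V. v x = 1 \<and> (\<forall>e'\<in>insert e S - {x}. v e' = 0)" if x: "x \<in> S" for x
  proof (intro bexI conjI ballI)
    \<comment> \<open>correct the dual vector at \<open>x\<close> so that it also vanishes at \<open>e\<close>\<close>
    show "d x - fscale (d x e) u \<in> V"
      using d(1)[OF x] u(1) by (intro fun_vs.subspace_diff[OF V] fun_vs.subspace_scale[OF V])
    show "(d x - fscale (d x e) u) x = 1"
      using d(2)[OF x x] u(3)[OF x] by simp
    show "(d x - fscale (d x e) u) e' = 0" if "e' \<in> insert e S - {x}" for e'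
      using that d(2)[OF x] u(2,3) by auto
  qed
  moreover have "\<forall>e'\<in>insert e S - {e}. u e' = 0"
    using u(3) by blast
  ultimately show ?thesis
    using u(1,2) by (auto simp: coord_separated_def)
qed

lemma coord_independent_subset:
  assumes "coord_independent V S" "T \<subseteq> S" "finite S"
  shows "coord_independent V T"
  unfolding coord_independent_def
proof (intro allI impI)
  fix a assume a: "\<forall>v\<in>V. (\<Sum>e\<in>T. a e * v e) = 0"
  let ?a = "\<lambda>e. if e \<in> T then a e else 0"
  have "(\<Sum>e\<in>T. a e * v e) = (\<Sum>e\<in>S. ?a e * v e)" for v
  proof -
    have "(\<Sum>e\<in>T. a e * v e) = (\<Sum>e\<in>T. ?a e * v e)"
      by simp
    also have "\<dots> = (\<Sum>e\<in>S. ?a e * v e)"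
      using assms(2,3) by (intro sum.mono_neutral_left) auto
    finally show ?thesis .
  qed
  then have "?a e = 0" if "e \<in> S" for e
    using coord_independentD[OF assms(1) _ that, of ?a] a by simp
  then show "\<forall>e\<in>T. a e = 0"
    using assms(2) by (metis subsetD)
qed

lemma coord_independent_imp_separated:
  assumes V: "fun_vs.subspace V" and "finite S" "coord_independent V S"
  shows "coord_separated V S"
  using assms(2,3)
proof (induction S rule: finite_induct)
  case empty
  then show ?case
    by (simp add: coord_separated_def)
next
  case (insert x T)
  have sep: "coord_separated V T"
    using insert coord_independent_subset[OF insert.prems] by blast
  obtain d where d: "\<And>e. e \<in> T \<Longrightarrow> d e \<in> V"
    "\<And>e e'. e \<in> T \<Longrightarrow> e' \<in> T \<Longrightarrow> d e e' = (if e = e' then 1 else 0)"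
    using coord_separatedE[OF sep] by blast
  have "\<exists>w\<in>V. (\<forall>b\<in>T. w b = 0) \<and> w x \<noteq> 0"
  proof (rule ccontr)
    assume no_w: "\<not> ?thesis"
    \<comment> \<open>then \<open>v x = (\<Sum>t\<in>T. v t * d t x)\<close> for all \<open>v \<in> V\<close>, a nontrivial relation\<close>
    let ?a = "\<lambda>e. if e = x then 1 else - d e x"
    have "(\<Sum>e\<in>insert x T. ?a e * v e) = 0" if v: "v \<in> V" for v
    proof -
      define w where "w = v - (\<Sum>t\<in>T. fscale (v t) (d t))"
      have w_apply: "w e = v e - (\<Sum>t\<in>T. v t * d t e)" for e
        by (simp add: w_def sum_apply)
      have "w \<in> V"
        unfolding w_def using d(1)
        by (intro fun_vs.subspace_diff[OF V v] fun_vs.subspace_sum[OF V] fun_vs.subspace_scale[OF V])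
      moreover have "w b = 0" if "b \<in> T" for b
        unfolding w_apply using that
        by (subst sum_biorthogonal[OF insert.hyps(1) that]) (auto simp: d(2))
      ultimately have "w x = 0"
        using no_w by blast
      moreover have "(\<Sum>e\<in>T. ?a e * v e) = - (\<Sum>t\<in>T. v t * d t x)"
        using insert.hyps(2) by (auto simp: sum_negf[symmetric] intro!: sum.cong)
      then have "(\<Sum>e\<in>insert x T. ?a e * v e) = v x - (\<Sum>t\<in>T. v t * d t x)"
        using insert.hyps by simp
      ultimately show ?thesis
        by (simp add: w_apply)
    qed
    then have "?a x = 0"
      using coord_independentD[OF insert.prems _ insertI1, of ?a] by simp
    then show False
      by simp
  qed
  then show ?case
    using coord_separated_insert[OF V sep] by blast
qed

lemma (in vector_space) dim_image_eq_card_iff: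
  assumes "finite S"
  shows "dim (f ` S) = card S \<longleftrightarrow> inj_on f S \<and> independent (f ` S)"
proof
  assume dim: "dim (f ` S) = card S"
  have "dim (f ` S) \<le> card (f ` S)" "card (f ` S) \<le> card S"
    using assms by (simp_all add: dim_le_card' card_image_le)
  then have card: "card (f ` S) = card S" "dim (f ` S) = card (f ` S)"
    using dim by linarith+
  obtain B where B: "B \<subseteq> f ` S" "independent B" "card B = dim (f ` S)"
    using basis_exists by metis
  have "B = f ` S"
    using B(1,3) card(2) assms by (simp add: card_subset_eq)
  then show "inj_on f S \<and> independent (f ` S)"
    using B(2) card(1) assms by (simp add: eq_card_imp_inj_on)
next
  assume "inj_on f S \<and> independent (f ` S)"
  then show "dim (f ` S) = card S"
    by (simp add: dim_eq_card_independent card_image)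
qed

lemma sum_coord_restr_eq_0_iff:
  assumes "inj_on (coord_restr V) S"
  shows "(\<Sum>x\<in>coord_restr V ` S. fscale (u x) x) = 0
    \<longleftrightarrow> (\<forall>v\<in>V. (\<Sum>e\<in>S. u (coord_restr V e) * v e) = 0)"
proof -
  have "(\<Sum>x\<in>coord_restr V ` S. fscale (u x) x) w = (\<Sum>e\<in>S. u (coord_restr V e) * coord_restr V e w)"
    for w
    using assms by (simp add: sum.reindex sum_apply)
  moreover have "(\<Sum>e\<in>S. u (coord_restr V e) * coord_restr V e w)
      = (if w \<in> V then (\<Sum>e\<in>S. u (coord_restr V e) * w e) else 0)" for w
    by (simp add: coord_restr_def)
  ultimately show ?thesis
    by (auto simp: fun_eq_iff)
qed

lemma coord_separated_iff_independent_coord_restr: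
  assumes V: "fun_vs.subspace V" and S: "finite S"
  shows "coord_separated V S
    \<longleftrightarrow> inj_on (coord_restr V) S \<and> fun_vs.independent (coord_restr V ` S)"
proof
  assume "coord_separated V S"
  then obtain d where d: "\<And>e. e \<in> S \<Longrightarrow> d e \<in> V"
    "\<And>e e'. e \<in> S \<Longrightarrow> e' \<in> S \<Longrightarrow> d e e' = (if e = e' then 1 else 0)"
    using coord_separatedE by blast
  have "coord_restr V e (d e') = (if e = e' then 1 else 0)" if "e \<in> S" "e' \<in> S" for e e'
    using d that by (auto simp: coord_restr_def)
  from biorthogonal_independent[of S "coord_restr V" d, OF S this]
  show "inj_on (coord_restr V) S \<and> fun_vs.independent (coord_restr V ` S)" ..
next
  assume "inj_on (coord_restr V) S \<and> fun_vs.independent (coord_restr V ` S)"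
  then have inj: "inj_on (coord_restr V) S" and ind: "fun_vs.independent (coord_restr V ` S)"
    by blast+
  have "coord_independent V S"
    unfolding coord_independent_def
  proof (intro allI impI ballI)
    fix a e assume a: "\<forall>v\<in>V. (\<Sum>e\<in>S. a e * v e) = 0" and e: "e \<in> S"
    define u where "u x = a (the_inv_into S (coord_restr V) x)" for x
    have u: "u (coord_restr V e) = a e" if "e \<in> S" for e
      using inj that by (simp add: u_def the_inv_into_f_f)
    have "(\<Sum>e\<in>S. u (coord_restr V e) * v e) = (\<Sum>e\<in>S. a e * v e)" for v
      using u by (intro sum.cong) simp_all
    then have "\<forall>v\<in>V. (\<Sum>e\<in>S. u (coord_restr V e) * v e) = 0"
      using a by simp
    then have sum0: "(\<Sum>x\<in>coord_restr V ` S. fscale (u x) x) = 0"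
      using sum_coord_restr_eq_0_iff[OF inj, of u] by (rule iffD2[rotated])
    have "u (coord_restr V e) = 0"
      by (rule fun_vs.independentD[OF ind finite_imageI[OF S] order_refl sum0]) (use e in blast)
    then show "a e = 0"
      using u[OF e] by simp
  qed
  then show "coord_separated V S"
    by (rule coord_independent_imp_separated[OF V S])
qed

section \<open>Linear varieties and their matroids\<close>

lemma lin_subspace_iff: "lin_subspace E V \<longleftrightarrow> V \<subseteq> supp_on E \<and> fun_vs.subspace V"
  by (auto simp: lin_subspace_def fun_vs.subspace_def)

lemma direction_translate:
  assumes "fun_vs.subspace V"
  shows "direction ((\<lambda>v. s + v) ` V) = V"
proof
  show "direction ((\<lambda>v. s + v) ` V) \<subseteq> V"
    using fun_vs.subspace_diff[OF assms] by (auto simp: direction_def)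
  have "x = (s + x) - (s + 0)" for x :: "nat \<times> nat \<Rightarrow> 'a"
    by simp
  then show "V \<subseteq> direction ((\<lambda>v. s + v) ` V)"
    using fun_vs.subspace_0[OF assms] unfolding direction_def by blast
qed

lemma linear_varietyI:
  assumes "s \<in> supp_on E" "V \<subseteq> supp_on E" "fun_vs.subspace V" "K = (\<lambda>v. s + v) ` V"
  shows "linear_variety E K"
  using assms by (auto simp: linear_variety_def lin_subspace_iff)

lemma linear_varietyE:
  assumes "linear_variety E K"
  obtains s where "s \<in> supp_on E" "direction K \<subseteq> supp_on E" "fun_vs.subspace (direction K)"
    "K = (\<lambda>v. s + v) ` direction K"
proof -
  obtain s V where "s \<in> supp_on E" "V \<subseteq> supp_on E" "fun_vs.subspace V" "K = (\<lambda>v. s + v) ` V"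
    using assms by (auto simp: linear_variety_def lin_subspace_iff)
  with direction_translate[of V s] that show ?thesis
    by simp
qed

lemma linear_variety_direction:
  assumes "linear_variety E K"
  shows "fun_vs.subspace (direction K)" "direction K \<subseteq> supp_on E"
  using linear_varietyE[OF assms] by metis+

lemma m_indep_iff_separated:
  assumes "finite E" "linear_variety E K"
  shows "m_indep E K S \<longleftrightarrow> S \<subseteq> E \<and> coord_separated (direction K) S"
proof (cases "S \<subseteq> E")
  case True
  then have "finite S"
    using assms(1) finite_subset by blast
  moreover have "fun_vs.subspace (direction K)"
    using linear_variety_direction[OF assms(2)] by blast
  ultimately show ?thesis
    using True by (simp add: m_indep_def mrank_def fdim_eq_dim fun_vs.dim_image_eq_card_iff
        coord_separated_iff_independent_coord_restr)
next
  case False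
  then show ?thesis
    by (simp add: m_indep_def)
qed

lemma m_basisD:
  assumes "finite E" "linear_variety E K" "m_basis E K B"
  shows "B \<subseteq> E" "coord_separated (direction K) B"
  using assms(3) by (simp_all add: m_basis_def m_indep_iff_separated[OF assms(1,2)])

lemma m_basis_vanishing:
  assumes E: "finite E" and K: "linear_variety E K" and B: "m_basis E K B"
    and v: "v \<in> direction K" "\<And>b. b \<in> B \<Longrightarrow> v b = 0"
  shows "v = 0"
proof (rule ccontr)
  assume "v \<noteq> 0"
  then obtain e where e: "v e \<noteq> 0"
    by (auto simp: fun_eq_iff)
  have "e \<in> E"
    using supp_onD[of v E e] linear_variety_direction(2)[OF K] v(1) e by blast
  moreover have "e \<notin> B"
    using v(2) e by blast
  moreover have "coord_separated (direction K) (insert e B)"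
    using coord_separated_insert[OF linear_variety_direction(1)[OF K] m_basisD(2)[OF E K B] v e] .
  ultimately have "m_indep E K (insert e B)" "B \<subset> insert e B" "insert e B \<subseteq> E"
    using m_basisD(1)[OF E K B] by (auto simp: m_indep_iff_separated[OF E K])
  then show False
    using B unfolding m_basis_def by blast
qed

lemma coord_separated_maximal_subset:
  assumes V: "fun_vs.subspace V" and D: "finite D"
  obtains B where "B \<subseteq> D" "coord_separated V B"
    "\<And>u x. u \<in> V \<Longrightarrow> (\<And>b. b \<in> B \<Longrightarrow> u b = 0) \<Longrightarrow> x \<in> D \<Longrightarrow> u x = 0"
proof -
  let ?F = "{T. T \<subseteq> D \<and> coord_separated V T}"
  have "finite ?F"
    by (rule finite_subset[of _ "Pow D"]) (use D in auto)
  moreover have "{} \<in> ?F"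
    by (simp add: coord_separated_def)
  ultimately obtain B where "B \<in> ?F" and max: "\<forall>T\<in>?F. B \<subseteq> T \<longrightarrow> B = T"
    using finite_has_maximal[of ?F] by blast
  then have B: "B \<subseteq> D" "coord_separated V B"
    by simp_all
  have "u x = 0" if u: "u \<in> V" "\<And>b. b \<in> B \<Longrightarrow> u b = 0" and x: "x \<in> D" for u x
  proof (rule ccontr)
    assume ux: "u x \<noteq> 0"
    have "insert x B \<in> ?F"
      using coord_separated_insert[OF V B(2) u ux] B(1) x by simp
    then have "x \<in> B"
      using max by blast
    then show False
      using u(2) ux by simp
  qed
  with B that show ?thesis
    by blast
qed

lemma m_coindepI:
  assumes E: "finite E" and K: "linear_variety E K" and C: "C \<subseteq> E"
    and spanning: "\<And>v. v \<in> direction K \<Longrightarrow> (\<And>e. e \<in> E - C \<Longrightarrow> v e = 0) \<Longrightarrow> v = 0"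
  shows "m_coindep E K C"
proof -
  have "finite (E - C)"
    using E by simp
  then obtain B where B: "B \<subseteq> E - C" "coord_separated (direction K) B"
    and vanish: "\<And>u x. u \<in> direction K \<Longrightarrow> (\<And>b. b \<in> B \<Longrightarrow> u b = 0) \<Longrightarrow> x \<in> E - C \<Longrightarrow> u x = 0"
    using coord_separated_maximal_subset[OF linear_variety_direction(1)[OF K]] by blast
  have "m_basis E K B"
    unfolding m_basis_def
  proof (intro conjI allI impI notI)
    have "B \<subseteq> E"
      using B(1) by blast
    then show "m_indep E K B"
      using B(2) by (simp add: m_indep_iff_separated[OF E K])
    fix S assume S: "B \<subset> S \<and> S \<subseteq> E" and "m_indep E K S"
    then have sep: "coord_separated (direction K) S"
      by (simp add: m_indep_iff_separated[OF E K])
    obtain e where e: "e \<in> S" "e \<notin> B"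
      using S by blast
    obtain u where u: "u \<in> direction K" "u e = 1" "\<forall>e'\<in>S - {e}. u e' = 0"
      using sep e(1) unfolding coord_separated_def by blast
    have uB: "u b = 0" if "b \<in> B" for b
    proof -
      have "b \<in> S - {e}"
        using S e(2) that by blast
      then show ?thesis
        using u(3) by blast
    qed
    have "u = 0"
      by (rule spanning[OF u(1)]) (rule vanish[OF u(1) uB])
    then show False
      using u(2) by simp
  qed
  then show ?thesis
    using B(1) C unfolding m_coindep_def m_cobasis_def by blast
qed

lemma fdim_direction_eq_card_basis:
  assumes E: "finite E" and K: "linear_variety E K" and B: "m_basis E K B"
  shows "fdim (direction K) = card B"
proof -
  have W: "fun_vs.subspace (direction K)" "direction K \<subseteq> supp_on E"
    using linear_variety_direction[OF K] by blast+
  have finB: "finite B"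
    using finite_subset[OF m_basisD(1)[OF E K B] E] .
  obtain d where d: "\<And>b. b \<in> B \<Longrightarrow> d b \<in> direction K"
    "\<And>b b'. b \<in> B \<Longrightarrow> b' \<in> B \<Longrightarrow> d b b' = (if b = b' then 1 else 0)"
    using coord_separatedE[OF m_basisD(2)[OF E K B]] by blast
  have "v \<in> fun_vs.span (d ` B)" if v: "v \<in> direction K" for v
  proof -
    have "v - (\<Sum>b\<in>B. fscale (v b) (d b)) = 0"
    proof (rule m_basis_vanishing[OF E K B])
      show "v - (\<Sum>b\<in>B. fscale (v b) (d b)) \<in> direction K"
        using d(1) by (intro fun_vs.subspace_diff[OF W(1) v] fun_vs.subspace_sum[OF W(1)]
            fun_vs.subspace_scale[OF W(1)])
      show "(v - (\<Sum>b\<in>B. fscale (v b) (d b))) b' = 0" if "b' \<in> B" for b'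
      proof -
        have "(\<Sum>b\<in>B. fscale (v b) (d b)) b' = (\<Sum>b\<in>B. v b * d b b')"
          by (simp add: sum_apply)
        also have "\<dots> = v b'"
          by (rule sum_biorthogonal[OF finB that]) (simp add: d(2) that)
        finally show ?thesis
          by simp
      qed
    qed
    then have "v = (\<Sum>b\<in>B. fscale (v b) (d b))"
      by simp
    also have "\<dots> \<in> fun_vs.span (d ` B)"
      by (intro fun_vs.span_sum fun_vs.span_scale fun_vs.span_base imageI)
    finally show ?thesis .
  qed
  then have "fdim (direction K) \<le> card (d ` B)"
    unfolding fdim_eq_dim using finB by (intro fun_vs.dim_le_card) auto
  also have "\<dots> \<le> card B"
    using finB by (rule card_image_le)
  finally have "fdim (direction K) \<le> card B" .
  moreover have "card B \<le> fdim (direction K)"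
    by (rule card_le_fdim_biorthogonal[OF E W(2), of B d]) (simp_all add: d)
  ultimately show ?thesis
    by simp
qed

lemma linear_variety_fix_coords:
  assumes K: "linear_variety E K" and T: "finite T" "coord_separated (direction K) T"
  shows "linear_variety E {X \<in> K. \<forall>e\<in>T. X e = g e}"
    "direction {X \<in> K. \<forall>e\<in>T. X e = g e} = {v \<in> direction K. \<forall>e\<in>T. v e = 0}"
proof -
  define W where "W = direction K"
  obtain s where s: "s \<in> supp_on E" "W \<subseteq> supp_on E" "fun_vs.subspace W" "K = (\<lambda>v. s + v) ` W"
    by (rule linear_varietyE[OF K, folded W_def])
  obtain w where w: "w \<in> W" "\<And>e. e \<in> T \<Longrightarrow> w e = g e - s e"
    using coord_separated_prescribe[OF s(3) T[folded W_def], where g = "\<lambda>e. g e - s e"] by blast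
  let ?W0 = "{v \<in> W. \<forall>e\<in>T. v e = 0}"
  have W0: "fun_vs.subspace ?W0"
    using s(3) by (auto simp: fun_vs.subspace_def)
  have eq: "{X \<in> K. \<forall>e\<in>T. X e = g e} = (\<lambda>v. (s + w) + v) ` ?W0"
  proof (intro equalityI subsetI)
    fix X assume "X \<in> {X \<in> K. \<forall>e\<in>T. X e = g e}"
    then obtain u where u: "u \<in> W" "X = s + u" and X: "\<forall>e\<in>T. X e = g e"
      using s(4) by blast
    have "s e + u e = s e + w e" if "e \<in> T" for e
      using X u(2) w(2) that by (simp add: eq_diff_eq add.commute)
    then have "u e = w e" if "e \<in> T" for e
      using that by simp
    then have "u - w \<in> ?W0"
      using fun_vs.subspace_diff[OF s(3) u(1) w(1)] by simp
    moreover have "X = (s + w) + (u - w)"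
      using u(2) by simp
    ultimately show "X \<in> (\<lambda>v. (s + w) + v) ` ?W0"
      by blast
  next
    fix X assume "X \<in> (\<lambda>v. (s + w) + v) ` ?W0"
    then obtain v where v: "v \<in> W" "\<forall>e\<in>T. v e = 0" and X: "X = s + (w + v)"
      by (auto simp: add.assoc)
    have "X \<in> K"
      using fun_vs.subspace_add[OF s(3) w(1) v(1)] s(4) X by blast
    moreover have "\<forall>e\<in>T. X e = g e"
      using v(2) w(2) X by simp
    ultimately show "X \<in> {X \<in> K. \<forall>e\<in>T. X e = g e}"
      by blast
  qed
  have "s + w \<in> supp_on E"
    using fun_vs.subspace_add[OF supp_on_subspace s(1)] w(1) s(2) by blast
  moreover have "?W0 \<subseteq> supp_on E"
    using s(2) by blast
  ultimately show "linear_variety E {X \<in> K. \<forall>e\<in>T. X e = g e}"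
    using linear_varietyI[OF _ _ W0 eq] by blast
  have "direction {X \<in> K. \<forall>e\<in>T. X e = g e} = ?W0"
    unfolding eq by (rule direction_translate[OF W0])
  then show "direction {X \<in> K. \<forall>e\<in>T. X e = g e} = {v \<in> direction K. \<forall>e\<in>T. v e = 0}"
    by (simp add: W_def)
qed

section \<open>Deleting a row and a column\<close>

definition shift_from :: "nat \<Rightarrow> nat \<Rightarrow> nat" where
  "shift_from i a = (if i \<le> a then a + 1 else a)"

lemma iota_shift_from: "iota i' j' (a, b) = (shift_from i' a, shift_from j' b)"
  by (simp add: iota_def shift_from_def)

lemma iota_inj: "inj (iota i' j')"
  by (auto simp: inj_on_def iota_def split: if_splits)

lemma iota_image_idx:
  assumes "i' \<in> {1..n}" "j' \<in> {1..k}"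
  shows "iota i' j' ` idx (n - 1) (k - 1) = {q \<in> idx n k. fst q \<noteq> i' \<and> snd q \<noteq> j'}"
proof (intro equalityI subsetI)
  fix q assume "q \<in> iota i' j' ` idx (n - 1) (k - 1)"
  then obtain a b where "(a, b) \<in> idx (n - 1) (k - 1)" "q = iota i' j' (a, b)"
    by auto
  then show "q \<in> {q \<in> idx n k. fst q \<noteq> i' \<and> snd q \<noteq> j'}"
    using assms by (auto simp: iota_def idx_def)
next
  fix q assume q: "q \<in> {q \<in> idx n k. fst q \<noteq> i' \<and> snd q \<noteq> j'}"
  obtain a b where ab: "q = (a, b)"
    by fastforce
  let ?p = "(if a > i' then a - 1 else a, if b > j' then b - 1 else b)"
  have "?p \<in> idx (n - 1) (k - 1)" "iota i' j' ?p = q"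
    using assms q unfolding ab by (auto simp: iota_def idx_def)
  then show "q \<in> iota i' j' ` idx (n - 1) (k - 1)"
    by (metis imageI)
qed

lemma iota_idx:
  assumes "i' \<in> {1..n}" "j' \<in> {1..k}" "p \<in> idx (n - 1) (k - 1)"
  shows "iota i' j' p \<in> idx n k" "fst (iota i' j' p) \<noteq> i'" "snd (iota i' j' p) \<noteq> j'"
  using iota_image_idx[OF assms(1,2)] assms(3) by blast+

lemma idx_decompose:
  assumes "i' \<in> {1..n}" "j' \<in> {1..k}"
  shows "idx n k = ({1..n} \<times> {j'}) \<union> ({i'} \<times> ({1..k} - {j'})) \<union> iota i' j' ` idx (n - 1) (k - 1)"
  unfolding iota_image_idx[OF assms] using assms by (auto simp: idx_def)

lemma module_hom_delete_rc: "module_hom fscale fscale (delete_rc n k i' j' :: (nat \<times> nat \<Rightarrow> 'a::field) \<Rightarrow> _)"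
  unfolding module_hom_iff module_iff_vector_space
  by (auto simp: fun_vs.vector_space_axioms delete_rc_def fun_eq_iff algebra_simps)

lemma delete_rc_apply: "p \<in> idx (n - 1) (k - 1) \<Longrightarrow> delete_rc n k i' j' X p = X (iota i' j' p)"
  by (simp add: delete_rc_def)

lemma delete_rc_add:
  "delete_rc n k i' j' (X + Y :: nat \<times> nat \<Rightarrow> 'a::monoid_add) = delete_rc n k i' j' X + delete_rc n k i' j' Y"
  by (simp add: delete_rc_def fun_eq_iff)

lemma delete_rc_supp_on: "delete_rc n k i' j' X \<in> supp_on (idx (n - 1) (k - 1))"
  by (simp add: delete_rc_def supp_on_def)

lemma linear_variety_delete_rc:
  fixes K :: "(nat \<times> nat \<Rightarrow> 'a::field) set"
  assumes K: "linear_variety E K"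
  shows "linear_variety (idx (n - 1) (k - 1)) (delete_rc n k i' j' ` K)"
    "direction (delete_rc n k i' j' ` K) = delete_rc n k i' j' ` direction K"
proof -
  let ?del = "delete_rc n k i' j' :: (nat \<times> nat \<Rightarrow> 'a) \<Rightarrow> _"
  define W where "W = direction K"
  obtain s where s: "fun_vs.subspace W" "K = (\<lambda>v. s + v) ` W"
    using linear_varietyE[OF K, folded W_def] by metis
  have eq: "?del ` K = (\<lambda>v. ?del s + v) ` (?del ` W)"
    unfolding s(2) image_image delete_rc_add ..
  have sub: "fun_vs.subspace (?del ` W)"
    by (rule module_hom.subspace_image[OF module_hom_delete_rc s(1)])
  show "linear_variety (idx (n - 1) (k - 1)) (?del ` K)"
    by (rule linear_varietyI[OF delete_rc_supp_on _ sub eq]) (use delete_rc_supp_on in blast)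
  have "direction (?del ` K) = ?del ` W"
    unfolding eq by (rule direction_translate[OF sub])
  then show "direction (?del ` K) = ?del ` direction K"
    by (simp add: W_def)
qed

lemma card_iota_preimage_le_fdim:
  fixes K K' :: "(nat \<times> nat \<Rightarrow> 'a::field) set"
  assumes i': "i' \<in> {1..n}" and j': "j' \<in> {1..k}"
    and K: "linear_variety (idx n k) K" and B: "m_basis (idx n k) K B"
    and col: "{1..n} \<times> {j'} \<subseteq> B"
    and K': "direction K' = delete_rc n k i' j' ` {v \<in> direction K. \<forall>e\<in>{1..n} \<times> {j'}. v e = 0}"
  shows "card {p \<in> idx (n - 1) (k - 1). iota i' j' p \<in> B} \<le> fdim (direction K')"
proof -
  let ?\<iota> = "iota i' j'"
  have E: "finite (idx n k)" "finite (idx (n - 1) (k - 1))"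
    by (simp_all add: idx_def)
  obtain d where d: "\<And>b. b \<in> B \<Longrightarrow> d b \<in> direction K"
    "\<And>b b'. b \<in> B \<Longrightarrow> b' \<in> B \<Longrightarrow> d b b' = (if b = b' then 1 else 0)"
    using coord_separatedE[OF m_basisD(2)[OF E(1) K B]] by blast
  \<comment> \<open>the dual vectors of \<open>B\<close> at the positions \<open>\<iota> p\<close> survive the deletion\<close>
  show ?thesis
  proof (rule card_le_fdim_biorthogonal[OF E(2)])
    show "direction K' \<subseteq> supp_on (idx (n - 1) (k - 1))"
      unfolding K' using delete_rc_supp_on by blast
    fix p assume "p \<in> {p \<in> idx (n - 1) (k - 1). ?\<iota> p \<in> B}"
    then have pB: "?\<iota> p \<in> B" and pE: "p \<in> idx (n - 1) (k - 1)"
      by simp_all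
    have "d (?\<iota> p) e = 0" if "e \<in> {1..n} \<times> {j'}" for e
    proof -
      have "e \<in> B" "?\<iota> p \<noteq> e"
        using col that iota_idx(3)[OF i' j' pE] by auto
      then show ?thesis
        using d(2)[OF pB] by simp
    qed
    then show "delete_rc n k i' j' (d (?\<iota> p)) \<in> direction K'"
      unfolding K' using d(1)[OF pB] by blast
    fix p' assume "p' \<in> {p \<in> idx (n - 1) (k - 1). ?\<iota> p \<in> B}"
    then show "delete_rc n k i' j' (d (?\<iota> p)) p' = (if p = p' then 1 else 0)"
      using d(2)[OF pB] iota_inj[of i' j'] by (simp add: delete_rc_apply inj_eq)
  qed
qed

lemma card_idx_subset_decompose:
  assumes i': "i' \<in> {1..n}" and j': "j' \<in> {1..k}"
    and B: "B \<subseteq> idx n k" "{1..n} \<times> {j'} \<subseteq> B"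
  shows "card B = n + card (B \<inter> ({i'} \<times> ({1..k} - {j'})))
    + card {p \<in> idx (n - 1) (k - 1). iota i' j' p \<in> B}"
proof -
  let ?col = "{1..n} \<times> {j'}" and ?R = "{i'} \<times> ({1..k} - {j'})" and ?\<iota> = "iota i' j'"
  define P where "P = {p \<in> idx (n - 1) (k - 1). ?\<iota> p \<in> B}"
  have B_eq: "B = (?col \<union> (B \<inter> ?R)) \<union> ?\<iota> ` P"
    using B idx_decompose[OF i' j'] by (auto simp: P_def)
  have "(?col \<union> ?R) \<inter> ?\<iota> ` P = {}"
  proof -
    define Q where "Q = ?col \<union> ?R"
    have "?\<iota> p \<notin> Q" if "p \<in> P" for p
      using that iota_idx[OF i' j', of p] by (auto simp: P_def Q_def)
    then show ?thesis
      unfolding Q_def[symmetric] by blast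
  qed
  then have disj: "(?col \<union> (B \<inter> ?R)) \<inter> ?\<iota> ` P = {}"
    by blast
  have finP: "finite P"
    by (simp add: P_def idx_def)
  have "card B = card ((?col \<union> (B \<inter> ?R)) \<union> ?\<iota> ` P)"
    using B_eq by (rule arg_cong)
  also have "\<dots> = card (?col \<union> (B \<inter> ?R)) + card (?\<iota> ` P)"
    by (rule card_Un_disjoint) (use finP disj in simp_all)
  also have "card (?col \<union> (B \<inter> ?R)) = card ?col + card (B \<inter> ?R)"
    by (rule card_Un_disjoint) auto
  also have "card (?\<iota> ` P) = card P"
    using inj_on_subset[OF iota_inj subset_UNIV] by (rule card_image)
  finally show ?thesis
    by (simp add: card_cartesian_product P_def)
qed

lemma codim_delete_rc_le:
  fixes K K' :: "(nat \<times> nat \<Rightarrow> 'a::field) set"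
  assumes i': "i' \<in> {1..n}" and j': "j' \<in> {1..k}"
    and K: "linear_variety (idx n k) K" and B: "m_basis (idx n k) K B"
    and col: "{1..n} \<times> {j'} \<subseteq> B"
    and K': "direction K' = delete_rc n k i' j' ` {v \<in> direction K. \<forall>e\<in>{1..n} \<times> {j'}. v e = 0}"
  shows "codim (idx (n - 1) (k - 1)) K' + card ((idx n k - B) \<inter> ({i'} \<times> {1..k}))
    \<le> codim (idx n k) K"
proof -
  let ?R = "{i'} \<times> ({1..k} - {j'})" and ?P = "{p \<in> idx (n - 1) (k - 1). iota i' j' p \<in> B}"
  have E: "finite (idx n k)"
    by (simp add: idx_def)
  have BE: "B \<subseteq> idx n k"
    by (rule m_basisD(1)[OF E K B])
  have "card ((idx n k - B) \<inter> ({i'} \<times> {1..k})) + card (B \<inter> ?R) = k - 1"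
  proof -
    have "(i', j') \<in> B"
      using col i' by blast
    then have "(idx n k - B) \<inter> ({i'} \<times> {1..k}) = ?R - B"
      using i' by (auto simp: idx_def)
    moreover have "card (?R - B) + card (B \<inter> ?R) = card ((?R - B) \<union> (B \<inter> ?R))"
      by (rule card_Un_disjoint[symmetric]) auto
    moreover have "(?R - B) \<union> (B \<inter> ?R) = ?R"
      by blast
    ultimately show ?thesis
      using j' by (simp add: card_cartesian_product)
  qed
  moreover have "card ?P \<le> (n - 1) * (k - 1)"
    using card_mono[of "idx (n - 1) (k - 1)" ?P] by (simp add: idx_def)
  moreover have "n * k = (n - 1) * (k - 1) + n + k - 1"
    using i' j' by (cases n; cases k) auto
  moreover have "codim (idx n k) K = n * k - card B"
    by (simp add: codim_def fdim_direction_eq_card_basis[OF E K B] idx_def card_cartesian_product)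
  moreover have "codim (idx (n - 1) (k - 1)) K' = (n - 1) * (k - 1) - fdim (direction K')"
    by (simp add: codim_def idx_def card_cartesian_product)
  ultimately show ?thesis
    using card_iota_preimage_le_fdim[OF i' j' K B col K'] card_idx_subset_decompose[OF i' j' BE col]
    by linarith
qed

lemma m_coindep_delete_rc:
  fixes K K' :: "(nat \<times> nat \<Rightarrow> 'a::field) set"
  assumes i': "i' \<in> {1..n}" and j': "j' \<in> {1..k}"
    and K: "linear_variety (idx n k) K" and B: "m_basis (idx n k) K B"
    and col: "{1..n} \<times> {j'} \<subseteq> B"
    and K': "linear_variety (idx (n - 1) (k - 1)) K'"
      "direction K' = delete_rc n k i' j' ` {v \<in> direction K. \<forall>e\<in>{1..n} \<times> {j'}. v e = 0}"
    and Bs': "m_cobasis (idx (n - 1) (k - 1)) K' Bs'"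
  shows "m_coindep (idx n k) K (((idx n k - B) \<inter> ({i'} \<times> {1..k})) \<union> iota i' j' ` Bs')"
proof -
  let ?E = "idx n k" and ?E' = "idx (n - 1) (k - 1)" and ?\<iota> = "iota i' j'"
  let ?col = "{1..n} \<times> {j'}" and ?R = "{i'} \<times> ({1..k} - {j'})"
  define C where "C = ((?E - B) \<inter> ({i'} \<times> {1..k})) \<union> ?\<iota> ` Bs'"
  obtain B' where B': "m_basis ?E' K' B'" and Bs'_eq: "Bs' = ?E' - B'"
    using Bs' unfolding m_cobasis_def by blast
  have E: "finite ?E" "finite ?E'"
    by (simp_all add: idx_def)
  have BE: "B \<subseteq> ?E" and B'E': "B' \<subseteq> ?E'"
    using m_basisD(1)[OF E(1) K B] m_basisD(1)[OF E(2) K'(1) B'] .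
  have outside: "e \<in> ?E - C" if "e \<in> ?col \<union> (B \<inter> ?R) \<union> ?\<iota> ` B'" for e
  proof -
    have "e \<notin> ?\<iota> ` Bs'"
    proof
      assume "e \<in> ?\<iota> ` Bs'"
      then obtain p where p: "p \<in> ?E'" "p \<notin> B'" "e = ?\<iota> p"
        unfolding Bs'_eq by blast
      then show False
        using that iota_idx[OF i' j' p(1)] by (auto simp: mem_Times_iff dest: injD[OF iota_inj])
    qed
    moreover have "e \<in> ?E \<and> (e \<in> B \<or> fst e \<noteq> i')"
      using that
    proof (elim UnE)
      assume "e \<in> ?\<iota> ` B'"
      then obtain q where "q \<in> ?E'" "e = ?\<iota> q"
        using B'E' by blast
      then show ?thesis
        using iota_idx[OF i' j' \<open>q \<in> ?E'\<close>] by simp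
    qed (use col BE in auto)
    ultimately show ?thesis
      by (auto simp: C_def)
  qed
  have "C \<subseteq> ?E"
    unfolding C_def Bs'_eq using iota_idx(1)[OF i' j'] by blast
  then have "m_coindep ?E K C"
  proof (rule m_coindepI[OF E(1) K])
    fix v assume v: "v \<in> direction K" and vanish: "\<And>e. e \<in> ?E - C \<Longrightarrow> v e = 0"
    \<comment> \<open>\<open>v\<close> vanishes on column \<open>j'\<close>, so its deletion lies in the direction of \<open>K'\<close>\<close>
    have del0: "delete_rc n k i' j' v = 0"
    proof (rule m_basis_vanishing[OF E(2) K'(1) B'])
      show "delete_rc n k i' j' v \<in> direction K'"
        unfolding K'(2) using v vanish outside by blast
      show "delete_rc n k i' j' v p = 0" if "p \<in> B'" for p
      proof -
        have "delete_rc n k i' j' v p = v (?\<iota> p)"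
          using that B'E' by (intro delete_rc_apply) blast
        also have "\<dots> = 0"
          using vanish outside that by blast
        finally show ?thesis .
      qed
    qed
    have "v (?\<iota> p) = 0" if "p \<in> ?E'" for p
      using delete_rc_apply[OF that, of i' j' v] by (simp add: del0)
    moreover have "B \<subseteq> ?col \<union> (B \<inter> ?R) \<union> ?\<iota> ` ?E'"
      using BE unfolding idx_decompose[OF i' j'] by blast
    ultimately show "v = 0"
      using vanish outside by (intro m_basis_vanishing[OF E(1) K B v]) blast
  qed
  then show ?thesis
    by (simp add: C_def)
qed

section \<open>Cullis' determinant\<close>

lemma sqdet_eq_det: "sqdet k M = det (mat k k (\<lambda>(i, j). M (Suc i, Suc j)))"
proof -
  let ?A = "mat k k (\<lambda>(i, j). M (Suc i, Suc j))"
  have Suc: "bij_betw Suc {0..<k} {1..k}"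
    by (simp add: bij_betw_def image_Suc_atLeastLessThan atLeastLessThanSuc_atLeastAtMost)
  have pred: "bij_betw (\<lambda>x. x - 1) {1..k} {0..<k}"
    by (rule bij_betw_byWitness[where f' = Suc]) auto
  have "det ?A = (\<Sum>q | q permutes {0..<k}. signof q * (\<Prod>i = 0..<k. ?A $$ (i, q i)))"
    by (rule det_def') simp
  also have "\<dots> = (\<Sum>q | q permutes {0..<k}. signof q * (\<Prod>i = 0..<k. M (Suc i, Suc (q i))))"
    by (intro sum.cong prod.cong refl) (auto dest: permutes_in_image)
  also have "\<dots> = sqdet k M"
    unfolding sqdet_def
  proof (rule sum.reindex_bij_witness[where j = "map_permutation {0..<k} Suc"
        and i = "map_permutation {1..k} (\<lambda>x. x - 1)"])
    fix q assume "q \<in> {q. q permutes {0..<k}}"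
    then have q: "q permutes {0..<k}"
      by simp
    show "map_permutation {1..k} (\<lambda>x. x - 1) (map_permutation {0..<k} Suc q) = q"
      by (rule map_permutation_compose_inv[OF Suc q]) simp
    show "map_permutation {0..<k} Suc q \<in> {p. p permutes {1..k}}"
      using map_permutation_permutes[OF Suc q] by simp
    have "(\<Prod>i\<in>{1..k}. M (i, map_permutation {0..<k} Suc q i))
        = (\<Prod>i\<in>{0..<k}. M (Suc i, map_permutation {0..<k} Suc q (Suc i)))"
      using prod.reindex_bij_betw[OF Suc, of "\<lambda>i. M (i, map_permutation {0..<k} Suc q i)"] by simp
    also have "\<dots> = (\<Prod>i\<in>{0..<k}. M (Suc i, Suc (q i)))"
      by (intro prod.cong refl) (simp add: map_permutation_apply)
    finally show "of_int (sign (map_permutation {0..<k} Suc q)) *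
        (\<Prod>i\<in>{1..k}. M (i, map_permutation {0..<k} Suc q i)) =
        signof q * (\<Prod>i = 0..<k. M (Suc i, Suc (q i)))"
      using sign_map_permutation[of Suc "{0..<k}" q] q by simp
  next
    fix p assume "p \<in> {p. p permutes {1..k}}"
    then have p: "p permutes {1..k}"
      by simp
    show "map_permutation {0..<k} Suc (map_permutation {1..k} (\<lambda>x. x - 1) p) = p"
      by (rule map_permutation_compose_inv[OF pred p]) simp
    show "map_permutation {1..k} (\<lambda>x. x - 1) p \<in> {q. q permutes {0..<k}}"
      using map_permutation_permutes[OF pred p] by simp
  qed
  finally show ?thesis
    by simp
qed

lemma sqdet_cong:
  assumes "\<And>a b. a \<in> {1..k} \<Longrightarrow> b \<in> {1..k} \<Longrightarrow> M (a, b) = N (a, b)"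
  shows "sqdet k M = sqdet k N"
  unfolding sqdet_eq_det using assms by (intro arg_cong[of _ _ det] eq_matI) auto

lemma sqdet_column_expansion:
  fixes M :: "nat \<times> nat \<Rightarrow> 'a::comm_ring_1"
  assumes "b \<in> {1..k}"
  shows "sqdet k M = (\<Sum>a\<in>{1..k}. M (a, b) *
    (-1) ^ (a + b) * sqdet (k - 1) (\<lambda>(r, t). M (shift_from a r, shift_from b t)))"
proof -
  let ?A = "mat k k (\<lambda>(i, j). M (Suc i, Suc j))"
  have "sqdet k M = (\<Sum>i<k. ?A $$ (i, b - 1) * cofactor ?A i (b - 1))"
    unfolding sqdet_eq_det using assms by (intro laplace_expansion_column) auto
  also have "\<dots> = (\<Sum>a\<in>{1..k}. ?A $$ (a - 1, b - 1) * cofactor ?A (a - 1) (b - 1))"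
    by (rule sum.reindex_bij_witness[where i = "\<lambda>a. a - 1" and j = Suc]) auto
  also have "\<dots> = (\<Sum>a\<in>{1..k}. M (a, b) *
    (-1) ^ (a + b) * sqdet (k - 1) (\<lambda>(r, t). M (shift_from a r, shift_from b t)))"
  proof (intro sum.cong refl)
    fix a assume a: "a \<in> {1..k}"
    have "mat_delete ?A (a - 1) (b - 1) = mat (k - 1) (k - 1) (\<lambda>(i, j).
        (\<lambda>(r, t). M (shift_from a r, shift_from b t)) (Suc i, Suc j))"
      using a assms by (intro eq_matI) (auto simp: mat_delete_def shift_from_def)
    moreover have "(-1::'a) ^ (a - 1 + (b - 1)) = (-1) ^ (a + b)"
      using a assms by (cases a; cases b) auto
    moreover have "?A $$ (a - 1, b - 1) = M (a, b)"
      using a assms by auto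
    ultimately show "?A $$ (a - 1, b - 1) * cofactor ?A (a - 1) (b - 1) = M (a, b) *
        (-1) ^ (a + b) * sqdet (k - 1) (\<lambda>(r, t). M (shift_from a r, shift_from b t))"
      using a assms by (simp add: cofactor_def sqdet_eq_det mult.assoc)
  qed
  finally show ?thesis .
qed

lemma sqdet_zero_column:
  assumes "b \<in> {1..k}" "\<And>a. a \<in> {1..k} \<Longrightarrow> M (a, b) = 0"
  shows "sqdet k M = 0"
  using assms by (simp add: sqdet_column_expansion[OF assms(1)])

lemma sqdet_unit_column:
  fixes M :: "nat \<times> nat \<Rightarrow> 'a::comm_ring_1"
  assumes a: "a \<in> {1..k}" and b: "b \<in> {1..k}"
    and column: "\<And>r. r \<in> {1..k} \<Longrightarrow> M (r, b) = (if r = a then 1 else 0)"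
  shows "sqdet k M = (-1) ^ (a + b) * sqdet (k - 1) (\<lambda>(r, t). M (shift_from a r, shift_from b t))"
  unfolding sqdet_column_expansion[OF b] using a by (simp add: column if_distrib[of "\<lambda>x. x * _"] cong: if_cong)

lemma sum_list_map_Suc: "sum_list (map Suc xs) = sum_list xs + length xs"
  by (induction xs) auto

lemma sorted_dropWhile_less_ge: "sorted xs \<Longrightarrow> x \<in> set (dropWhile (\<lambda>x. x < (a::nat)) xs) \<Longrightarrow> a \<le> x"
  by (induction xs) (auto split: if_splits)

lemma sorted_list_of_set_insert_shift_from:
  assumes "finite c"
  shows "sorted_list_of_set (insert i (shift_from i ` c))
    = takeWhile (\<lambda>x. x < i) (sorted_list_of_set c) @ i # map Suc (dropWhile (\<lambda>x. x < i) (sorted_list_of_set c))"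
proof -
  define T where "T = takeWhile (\<lambda>x. x < i) (sorted_list_of_set c)"
  define D where "D = dropWhile (\<lambda>x. x < i) (sorted_list_of_set c)"
  have L: "sorted_list_of_set c = T @ D"
    by (simp add: T_def D_def)
  have T: "x < i" if "x \<in> set T" for x
    using that by (auto simp: T_def dest: set_takeWhileD)
  have D: "i \<le> x" if "x \<in> set D" for x
    using sorted_dropWhile_less_ge[OF sorted_sorted_list_of_set] that by (simp add: D_def)
  have "shift_from i x = x" if "x \<in> set T" for x
    using T[OF that] by (simp add: shift_from_def)
  then have shift_T: "shift_from i ` set T = set T"
    by (simp cong: image_cong)
  have "shift_from i x = Suc x" if "x \<in> set D" for x
    using D[OF that] by (simp add: shift_from_def)
  then have shift_D: "shift_from i ` set D = Suc ` set D"
    by (simp cong: image_cong)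
  have "c = set T \<union> set D"
    using assms L by (metis set_append set_sorted_list_of_set)
  moreover have "finite (insert i (shift_from i ` c))"
    using assms by simp
  ultimately have set_eq: "set (sorted_list_of_set (insert i (shift_from i ` c))) = set (T @ i # map Suc D)"
    by (simp add: image_Un shift_T shift_D del: sorted_list_of_set_insert_remove)
  have "sorted (T @ D)" "distinct (T @ D)"
    unfolding L[symmetric] by simp_all
  then have "sorted (T @ i # map Suc D)" "distinct (T @ i # map Suc D)"
    using T D by (fastforce simp: sorted_append sorted_map distinct_map less_imp_le)+
  then have "sorted_list_of_set (insert i (shift_from i ` c)) = T @ i # map Suc D"
    using sorted_distinct_set_unique[OF sorted_sorted_list_of_set distinct_sorted_list_of_set] set_eq
    by blast
  then show ?thesis
    by (simp add: T_def D_def)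
qed

lemma nth_sorted_list_of_set_insert_shift_from:
  assumes "finite c"
  obtains m where "m \<le> card c"
    "sorted_list_of_set (insert i (shift_from i ` c)) ! m = i"
    "\<And>a. a < card c \<Longrightarrow> sorted_list_of_set (insert i (shift_from i ` c)) ! shift_from m a
      = shift_from i (sorted_list_of_set c ! a)"
    "sum_list (sorted_list_of_set (insert i (shift_from i ` c)))
      = sum_list (sorted_list_of_set c) + i + (card c - m)"
proof -
  define T where "T = takeWhile (\<lambda>x. x < i) (sorted_list_of_set c)"
  define D where "D = dropWhile (\<lambda>x. x < i) (sorted_list_of_set c)"
  have L': "sorted_list_of_set c = T @ D"
    by (simp add: T_def D_def)
  have L: "sorted_list_of_set (insert i (shift_from i ` c)) = T @ i # map Suc D"
    unfolding T_def D_def by (rule sorted_list_of_set_insert_shift_from[OF assms])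
  have len: "card c = length T + length D"
    using arg_cong[OF L', of length] assms by simp
  have T: "x < i" if "x \<in> set T" for x
    using that by (auto simp: T_def dest: set_takeWhileD)
  have D: "i \<le> x" if "x \<in> set D" for x
    using sorted_dropWhile_less_ge[OF sorted_sorted_list_of_set] that by (simp add: D_def)
  show ?thesis
  proof
    show "length T \<le> card c"
      using len by simp
    show "sorted_list_of_set (insert i (shift_from i ` c)) ! length T = i"
      unfolding L by simp
    show "sum_list (sorted_list_of_set (insert i (shift_from i ` c)))
        = sum_list (sorted_list_of_set c) + i + (card c - length T)"
      unfolding L L' using len by (simp add: sum_list_map_Suc)
    fix a assume a: "a < card c"
    show "sorted_list_of_set (insert i (shift_from i ` c)) ! shift_from (length T) a
        = shift_from i (sorted_list_of_set c ! a)"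
    proof (cases "a < length T")
      case True
      then have "T ! a < i"
        using T nth_mem by blast
      then show ?thesis
        unfolding L L' using True by (simp add: nth_append shift_from_def)
    next
      case False
      then have "a - length T < length D"
        using a len by simp
      then have "i \<le> D ! (a - length T)" "map Suc D ! (a - length T) = Suc (D ! (a - length T))"
        using D nth_mem by auto
      moreover have "Suc a - length T = Suc (a - length T)"
        using False by simp
      ultimately show ?thesis
        unfolding L L' using False by (simp add: nth_append shift_from_def)
    qed
  qed
qed

lemma sorted_nth_ge_Suc:
  assumes "sorted_wrt (<) xs" "0 \<notin> set xs"
  shows "t < length xs \<Longrightarrow> Suc t \<le> xs ! t"
proof (induction t)
  case 0
  then show ?case
    using assms(2) nth_mem by (metis Suc_leI gr0I)
next
  case (Suc t)
  then have "xs ! t < xs ! Suc t"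
    using sorted_wrt_nth_less[OF assms(1)] by simp
  then show ?case
    using Suc by simp
qed

lemma sum_sorted_offsets:
  assumes "sorted_wrt (<) xs" "0 \<notin> set xs"
  shows "(\<Sum>a\<in>{1..length xs}. xs ! (a - 1) - a) + (\<Sum>a\<in>{1..length xs}. a) = sum_list xs"
proof -
  have "(\<Sum>a\<in>{1..length xs}. xs ! (a - 1) - a) + (\<Sum>a\<in>{1..length xs}. a)
      = (\<Sum>a\<in>{1..length xs}. xs ! (a - 1))"
    unfolding sum.distrib[symmetric]
  proof (intro sum.cong refl)
    fix a assume a: "a \<in> {1..length xs}"
    then have "Suc (a - 1) \<le> xs ! (a - 1)"
      by (intro sorted_nth_ge_Suc[OF assms]) auto
    then have "a \<le> xs ! (a - 1)"
      using a by simp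
    then show "xs ! (a - 1) - a + a = xs ! (a - 1)"
      by simp
  qed
  also have "\<dots> = (\<Sum>t<length xs. xs ! t)"
    by (rule sum.reindex_bij_witness[where i = Suc and j = "\<lambda>a. a - 1"]) auto
  also have "\<dots> = sum_list xs"
    by (simp add: sum_list_sum_nth atLeast0LessThan)
  finally show ?thesis .
qed

lemma minus_one_power_add_eq:
  assumes "a + b = c"
  shows "(-1 :: 'a::comm_ring_1) ^ a = (-1) ^ (c + b)"
proof -
  have "(-1 :: 'a) ^ (c + b) = (-1) ^ a * ((-1) ^ 2) ^ b"
    using assms by (simp add: power_add power_mult[symmetric] mult_2 add.assoc flip: assms)
  then show ?thesis
    by simp
qed

lemma sorted_offsets_sign_insert:
  fixes xs ys :: "nat list"
  assumes xs: "sorted_wrt (<) xs" "0 \<notin> set xs" "length xs = k"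
    and ys: "sorted_wrt (<) ys" "0 \<notin> set ys" "length ys = k - 1"
    and m: "1 \<le> k" "m \<le> k - 1" "sum_list xs = sum_list ys + i + (k - 1 - m)"
  shows "(-1::'a::comm_ring_1) ^ (\<Sum>a\<in>{1..k}. xs ! (a - 1) - a) * (-1) ^ (m + 1 + j)
    = (-1) ^ (i + j) * (-1) ^ (\<Sum>a\<in>{1..k - 1}. ys ! (a - 1) - a)"
proof -
  have "(\<Sum>a\<in>{1..k}. a) = (\<Sum>a\<in>{1..k - 1}. a) + k"
    using m(1) by (cases k) auto
  then have sign_xs: "(-1::'a) ^ (\<Sum>a\<in>{1..k}. xs ! (a - 1) - a)
      = (-1) ^ (sum_list xs + ((\<Sum>a\<in>{1..k - 1}. a) + k))"
    using sum_sorted_offsets[OF xs(1,2)] xs(3) by (intro minus_one_power_add_eq) simp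
  have sign_ys: "(-1::'a) ^ (\<Sum>a\<in>{1..k - 1}. ys ! (a - 1) - a)
      = (-1) ^ (sum_list ys + (\<Sum>a\<in>{1..k - 1}. a))"
    using sum_sorted_offsets[OF ys(1,2)] ys(3) by (intro minus_one_power_add_eq) simp
  have exponent: "sum_list xs + ((\<Sum>a\<in>{1..k - 1}. a) + k) + (m + 1 + j)
      = (i + j + (sum_list ys + (\<Sum>a\<in>{1..k - 1}. a))) + 2 * k"
    unfolding m(3) using m(1,2) by arith
  have "(-1::'a) ^ (\<Sum>a\<in>{1..k}. xs ! (a - 1) - a) * (-1) ^ (m + 1 + j)
      = (-1) ^ (i + j + (sum_list ys + (\<Sum>a\<in>{1..k - 1}. a)) + 2 * k)"
    unfolding sign_xs exponent[symmetric] by (rule power_add[symmetric])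
  also have "\<dots> = (-1) ^ (i + j) * (-1) ^ (\<Sum>a\<in>{1..k - 1}. ys ! (a - 1) - a)"
    unfolding sign_ys by (simp add: power_add power_mult)
  finally show ?thesis .
qed

lemma bij_betw_image_card_subsets:
  assumes "bij_betw f A B"
  shows "bij_betw (image f) {X. X \<subseteq> A \<and> card X = m} {Y. Y \<subseteq> B \<and> card Y = m}"
proof (rule bij_betw_subset[OF bij_betw_Pow[OF assms]])
  have inj: "card (f ` X) = card X" if "X \<subseteq> A" for X
    using that assms by (meson bij_betw_def card_image inj_on_subset)
  show "image f ` {X. X \<subseteq> A \<and> card X = m} = {Y. Y \<subseteq> B \<and> card Y = m}"
  proof (intro equalityI subsetI)
    fix Y assume "Y \<in> image f ` {X. X \<subseteq> A \<and> card X = m}"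
    then show "Y \<in> {Y. Y \<subseteq> B \<and> card Y = m}"
      using inj assms by (auto simp: bij_betw_def)
  next
    fix Y assume Y: "Y \<in> {Y. Y \<subseteq> B \<and> card Y = m}"
    then have "Y \<subseteq> f ` A"
      using assms by (auto simp: bij_betw_def)
    then obtain X where "X \<subseteq> A" "Y = f ` X"
      by (auto simp: subset_image_iff)
    then show "Y \<in> image f ` {X. X \<subseteq> A \<and> card X = m}"
      using Y inj by auto
  qed
qed auto

lemma bij_betw_insert_card_subsets:
  assumes "finite A" "i \<notin> A"
  shows "bij_betw (insert i) {X. X \<subseteq> A \<and> card X = m} {Y. Y \<subseteq> insert i A \<and> card Y = Suc m \<and> i \<in> Y}"
proof (rule bij_betw_byWitness[where f' = "\<lambda>Y. Y - {i}"])
  show "(\<lambda>Y. Y - {i}) ` {Y. Y \<subseteq> insert i A \<and> card Y = Suc m \<and> i \<in> Y} \<subseteq> {X. X \<subseteq> A \<and> card X = m}"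
    using assms by (auto simp: card_Diff_singleton_if finite_subset)
  show "insert i ` {X. X \<subseteq> A \<and> card X = m} \<subseteq> {Y. Y \<subseteq> insert i A \<and> card Y = Suc m \<and> i \<in> Y}"
  proof (rule image_subsetI)
    fix X assume X: "X \<in> {X. X \<subseteq> A \<and> card X = m}"
    then have "finite X" "i \<notin> X"
      using assms finite_subset by auto
    then show "insert i X \<in> {Y. Y \<subseteq> insert i A \<and> card Y = Suc m \<and> i \<in> Y}"
      using X by auto
  qed
qed (use assms in auto)

lemma bij_betw_shift_from: "i \<in> {1..n} \<Longrightarrow> bij_betw (shift_from i) {1..n - 1} ({1..n} - {i})"
  by (rule bij_betw_byWitness[where f' = "\<lambda>b. if i < b then b - 1 else b"]) (auto simp: shift_from_def)

lemma bij_betw_insert_shift_from: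
  assumes i: "i \<in> {1..n}" and k: "1 \<le> k"
  shows "bij_betw (\<lambda>c. insert i (shift_from i ` c))
    {c. c \<subseteq> {1..n - 1} \<and> card c = k - 1} {c. c \<subseteq> {1..n} \<and> card c = k \<and> i \<in> c}"
proof -
  have "insert i ({1..n} - {i}) = {1..n}" "Suc (k - 1) = k"
    using i k by auto
  then show ?thesis
    using bij_betw_trans[OF bij_betw_image_card_subsets[OF bij_betw_shift_from[OF i]]
        bij_betw_insert_card_subsets[of "{1..n} - {i}" i "k - 1"]]
    by (simp add: comp_def)
qed

definition cullis_term :: "nat \<Rightarrow> (nat \<times> nat \<Rightarrow> 'a::comm_ring_1) \<Rightarrow> nat set \<Rightarrow> 'a" where
  "cullis_term k X c = (-1) ^ (\<Sum>a\<in>{1..k}. sorted_list_of_set c ! (a - 1) - a)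
    * sqdet k (\<lambda>(a, b). X (sorted_list_of_set c ! (a - 1), b))"

lemma cullis_eq_sum_cullis_term: "cullis n k X = (\<Sum>c | c \<subseteq> {1..n} \<and> card c = k. cullis_term k X c)"
  by (simp add: cullis_def cullis_term_def)

lemma nth_sorted_list_of_set_mem:
  assumes "finite c" "a \<in> {1..card c}"
  shows "sorted_list_of_set c ! (a - 1) \<in> c"
proof -
  have "a - 1 < length (sorted_list_of_set c)"
    using assms by auto
  then show ?thesis
    using nth_mem set_sorted_list_of_set[OF assms(1)] by blast
qed

lemma cullis_term_zero_column:
  assumes "finite c" "card c = k" "b \<in> {1..k}" "\<And>i. i \<in> c \<Longrightarrow> X (i, b) = 0"
  shows "cullis_term k X c = 0"
  unfolding cullis_term_def using assms nth_sorted_list_of_set_mem[OF assms(1)]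
  by (subst sqdet_zero_column[where b = b]) auto

lemma sqdet_rows_unit_column:
  fixes X :: "nat \<times> nat \<Rightarrow> 'a::comm_ring_1"
  assumes j': "j' \<in> {1..k}"
    and column: "\<And>i. i \<in> set xs \<Longrightarrow> X (i, j') = (if i = i' then 1 else 0)"
    and xs: "distinct xs" "length xs = k" "m < k" "xs ! m = i'"
    and ys: "length ys = k - 1" "set ys \<subseteq> {1..n - 1}"
    and rows: "\<And>a. a < k - 1 \<Longrightarrow> xs ! shift_from m a = shift_from i' (ys ! a)"
  shows "sqdet k (\<lambda>(a, b). X (xs ! (a - 1), b))
    = (-1) ^ (m + 1 + j') * sqdet (k - 1) (\<lambda>(a, b). delete_rc n k i' j' X (ys ! (a - 1), b))"
proof -
  have "X (xs ! (r - 1), j') = (if r = m + 1 then 1 else 0)" if r: "r \<in> {1..k}" for r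
  proof -
    have "xs ! (r - 1) = xs ! m \<longleftrightarrow> r - 1 = m"
      using r xs by (intro nth_eq_iff_index_eq) auto
    then show ?thesis
      using column[of "xs ! (r - 1)"] r xs by auto
  qed
  then have "sqdet k (\<lambda>(a, b). X (xs ! (a - 1), b)) = (-1) ^ (m + 1 + j') *
      sqdet (k - 1) (\<lambda>(r, t). X (xs ! (shift_from (m + 1) r - 1), shift_from j' t))"
    using xs(3) j' by (subst sqdet_unit_column[where a = "m + 1" and b = j']) auto
  also have "sqdet (k - 1) (\<lambda>(r, t). X (xs ! (shift_from (m + 1) r - 1), shift_from j' t))
      = sqdet (k - 1) (\<lambda>(a, b). delete_rc n k i' j' X (ys ! (a - 1), b))"
  proof (rule sqdet_cong)
    fix a b assume a: "a \<in> {1..k - 1}" and b: "b \<in> {1..k - 1}"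
    have "a - 1 < length ys"
      using a ys by auto
    then have "ys ! (a - 1) \<in> {1..n - 1}"
      using ys(2) nth_mem by blast
    then have "(ys ! (a - 1), b) \<in> idx (n - 1) (k - 1)"
      using b by (simp add: idx_def)
    moreover have "shift_from (m + 1) a - 1 = shift_from m (a - 1)" "a - 1 < k - 1"
      using a by (auto simp: shift_from_def)
    ultimately show "(\<lambda>(r, t). X (xs ! (shift_from (m + 1) r - 1), shift_from j' t)) (a, b)
        = (\<lambda>(a, b). delete_rc n k i' j' X (ys ! (a - 1), b)) (a, b)"
      using rows by (simp add: delete_rc_apply iota_shift_from)
  qed
  finally show ?thesis .
qed

lemma cullis_term_insert_unit_column:
  fixes X :: "nat \<times> nat \<Rightarrow> 'a::comm_ring_1"
  assumes i': "i' \<in> {1..n}" and j': "j' \<in> {1..k}"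
    and column: "\<And>i. i \<in> {1..n} \<Longrightarrow> X (i, j') = (if i = i' then 1 else 0)"
    and c': "c' \<subseteq> {1..n - 1}" "card c' = k - 1"
  shows "cullis_term k X (insert i' (shift_from i' ` c'))
    = (-1) ^ (i' + j') * cullis_term (k - 1) (delete_rc n k i' j' X) c'"
proof -
  let ?c = "insert i' (shift_from i' ` c')"
  let ?L = "sorted_list_of_set ?c" and ?L' = "sorted_list_of_set c'"
  have fin: "finite c'" "finite ?c"
    using finite_subset[OF c'(1)] by simp_all
  obtain m where m: "m \<le> k - 1" "?L ! m = i'"
    "\<And>a. a < k - 1 \<Longrightarrow> ?L ! shift_from m a = shift_from i' (?L' ! a)"
    "sum_list ?L = sum_list ?L' + i' + (k - 1 - m)"
    using nth_sorted_list_of_set_insert_shift_from[OF fin(1), where i = i', unfolded c'(2)] by blast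
  have k: "1 \<le> k"
    using j' by simp
  have c: "?c \<subseteq> {1..n}" "card ?c = k"
    using bij_betwE[OF bij_betw_insert_shift_from[OF i' k]] c' by auto
  then have L: "sorted_wrt (<) ?L" "0 \<notin> set ?L" "distinct ?L" "length ?L = k" "set ?L \<subseteq> {1..n}"
    using fin(2) by (auto simp del: sorted_list_of_set_insert_remove)
  have L': "sorted_wrt (<) ?L'" "0 \<notin> set ?L'" "length ?L' = k - 1" "set ?L' \<subseteq> {1..n - 1}"
    using c' fin(1) by auto
  have "sqdet k (\<lambda>(a, b). X (?L ! (a - 1), b)) = (-1) ^ (m + 1 + j') *
      sqdet (k - 1) (\<lambda>(a, b). delete_rc n k i' j' X (?L' ! (a - 1), b))"
    using L k m(1-3) column by (intro sqdet_rows_unit_column[OF j' _ L(3,4) _ _ L'(3,4)]) auto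
  moreover have "(-1::'a) ^ (\<Sum>a\<in>{1..k}. ?L ! (a - 1) - a) * (-1) ^ (m + 1 + j')
      = (-1) ^ (i' + j') * (-1) ^ (\<Sum>a\<in>{1..k - 1}. ?L' ! (a - 1) - a)"
    using L L' k m(1,4) by (intro sorted_offsets_sign_insert) simp_all
  ultimately show ?thesis
    unfolding cullis_term_def by (simp only: mult.assoc[symmetric])
qed

lemma cullis_unit_column:
  fixes X :: "nat \<times> nat \<Rightarrow> 'a::comm_ring_1"
  assumes i': "i' \<in> {1..n}" and j': "j' \<in> {1..k}"
    and column: "\<And>i. i \<in> {1..n} \<Longrightarrow> X (i, j') = (if i = i' then 1 else 0)"
  shows "cullis n k X = (-1) ^ (i' + j') * cullis (n - 1) (k - 1) (delete_rc n k i' j' X)"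
proof -
  let ?C = "{c. c \<subseteq> {1..n} \<and> card c = k}" and ?C\<^sub>i = "{c. c \<subseteq> {1..n} \<and> card c = k \<and> i' \<in> c}"
  let ?C' = "{c. c \<subseteq> {1..n - 1} \<and> card c = k - 1}"
  have "cullis n k X = (\<Sum>c\<in>?C. cullis_term k X c)"
    by (rule cullis_eq_sum_cullis_term)
  also have "\<dots> = (\<Sum>c\<in>?C\<^sub>i. cullis_term k X c)"
  proof (rule sum.mono_neutral_right)
    show "finite ?C"
      by (rule finite_subset[of _ "Pow {1..n}"]) auto
    show "?C\<^sub>i \<subseteq> ?C"
      by blast
    show "\<forall>c\<in>?C - ?C\<^sub>i. cullis_term k X c = 0"
    proof
      fix c assume c: "c \<in> ?C - ?C\<^sub>i"
      then have "finite c"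
        using finite_subset[of c "{1..n}"] by blast
      then show "cullis_term k X c = 0"
        using c j' column by (intro cullis_term_zero_column[where b = j']) auto
    qed
  qed
  also have "\<dots> = (\<Sum>c'\<in>?C'. cullis_term k X (insert i' (shift_from i' ` c')))"
    using j' by (intro sum.reindex_bij_betw[symmetric] bij_betw_insert_shift_from[OF i']) simp
  also have "\<dots> = (\<Sum>c'\<in>?C'. (-1) ^ (i' + j') * cullis_term (k - 1) (delete_rc n k i' j' X) c')"
    using cullis_term_insert_unit_column[OF i' j' column] by (intro sum.cong) auto
  also have "\<dots> = (-1) ^ (i' + j') * cullis (n - 1) (k - 1) (delete_rc n k i' j' X)"
    by (simp add: cullis_eq_sum_cullis_term sum_distrib_left)
  finally show ?thesis .
qed

lemma cullis_delete_rc_eq_0: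
  fixes X :: "nat \<times> nat \<Rightarrow> 'a::comm_ring_1"
  assumes "i' \<in> {1..n}" "j' \<in> {1..k}" "cullis n k X = 0"
    and "\<forall>i\<in>{1..n}. X (i, j') = (if i = i' then 1 else 0)"
  shows "cullis (n - 1) (k - 1) (delete_rc n k i' j' X) = 0"
proof -
  let ?x = "cullis (n - 1) (k - 1) (delete_rc n k i' j' X)"
  have "(-1::'a) ^ (i' + j') * (-1) ^ (i' + j') = 1"
    by (simp flip: power_add mult_2)
  then have "?x = ((-1) ^ (i' + j') * (-1) ^ (i' + j')) * ?x"
    by simp
  also have "\<dots> = (-1) ^ (i' + j') * ((-1) ^ (i' + j') * ?x)"
    by (rule mult.assoc)
  also have "(-1) ^ (i' + j') * ?x = 0"
    using assms(3,4) cullis_unit_column[OF assms(1,2), of X] by simp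
  finally show ?thesis
    by simp
qed

theorem mainTheorem6:
  fixes K :: "(nat \<times> nat \<Rightarrow> 'a::field) set"
    and n k i' j' :: nat and Bs :: "(nat \<times> nat) set" and c :: "nat \<Rightarrow> 'a"
  assumes "k > 1" and "n \<ge> k"
    and "linear_variety (idx n k) K"
    and "m_cobasis (idx n k) K Bs"
    and "j' \<in> {1..k}" and "Bs \<inter> ({1..n} \<times> {j'}) = {}"
    and "i' \<in> {1..n}"
  defines "K' \<equiv> {delete_rc n k i' j' X |X. X \<in> K \<and> (\<forall>i\<in>{1..n}. X (i, j') = c i)}"
  shows "linear_variety (idx (n - 1) (k - 1)) K'
    \<and> codim (idx (n - 1) (k - 1)) K' + card (Bs \<inter> ({i'} \<times> {1..k})) \<le> codim (idx n k) K
    \<and> (\<forall>Bs'. m_cobasis (idx (n - 1) (k - 1)) K' Bs' \<longrightarrow>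
          m_coindep (idx n k) K ((Bs \<inter> ({i'} \<times> {1..k})) \<union> iota i' j' ` Bs'))
    \<and> ((\<forall>X\<in>K. cullis n k X = 0) \<and> (\<forall>i\<in>{1..n}. c i = (if i = i' then 1 else 0))
          \<longrightarrow> (\<forall>X'\<in>K'. cullis (n - 1) (k - 1) X' = 0))"
proof -
  note K = assms(3) and j' = assms(5) and i' = assms(7)
  let ?E = "idx n k" and ?E' = "idx (n - 1) (k - 1)" and ?col = "{1..n} \<times> {j'}"
  let ?K\<^sub>c = "{X \<in> K. \<forall>e\<in>?col. X e = c (fst e)}"
  have E: "finite ?E"
    by (simp add: idx_def)
  obtain B where B: "m_basis ?E K B" and Bs: "Bs = ?E - B"
    using assms(4) unfolding m_cobasis_def by blast
  have "?col \<subseteq> ?E"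
    using j' by (auto simp: idx_def)
  then have col: "?col \<subseteq> B"
    using assms(6) unfolding Bs by blast
  have K\<^sub>c: "linear_variety ?E ?K\<^sub>c" "direction ?K\<^sub>c = {v \<in> direction K. \<forall>e\<in>?col. v e = 0}"
    using linear_variety_fix_coords[OF K _ coord_separated_subset[OF m_basisD(2)[OF E K B] col],
        where g = "\<lambda>e. c (fst e)"]
    by simp_all
  have K': "K' = delete_rc n k i' j' ` ?K\<^sub>c"
    unfolding K'_def by auto
  have lv': "linear_variety ?E' K'"
    and dir': "direction K' = delete_rc n k i' j' ` {v \<in> direction K. \<forall>e\<in>?col. v e = 0}"
    unfolding K' using linear_variety_delete_rc[OF K\<^sub>c(1)] K\<^sub>c(2) by simp_all
  have "cullis (n - 1) (k - 1) X' = 0"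
    if singular: "\<forall>X\<in>K. cullis n k X = 0" and unit: "\<forall>i\<in>{1..n}. c i = (if i = i' then 1 else 0)"
      and "X' \<in> K'" for X'
  proof -
    obtain X where X: "X \<in> K" "\<forall>i\<in>{1..n}. X (i, j') = c i" "X' = delete_rc n k i' j' X"
      using \<open>X' \<in> K'\<close> unfolding K'_def by blast
    show ?thesis
      unfolding X(3) using singular unit X(1,2) by (intro cullis_delete_rc_eq_0[OF i' j']) auto
  qed
  then show ?thesis
    using lv' codim_delete_rc_le[OF i' j' K B col dir'] m_coindep_delete_rc[OF i' j' K B col lv' dir']
    unfolding Bs by blast
qed

end
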